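(* Let $\tau>0$ and $0\le\alpha<1$. There exist a constant $c>0$ and a non-increasing, strictly positive function $R:[0,\infty)\to(0,\infty)$, not depending on $n$, $f$ or $g$, such that for every $n$ and all $f,g\in\mathcal H^\alpha$ with $f(0)=g(0)=0$, $$\|\mathbb P^n_f-\mathbb P^n_g\|_{TV}\le c\,n^{1/2}\|f-g\|_\infty\quad\text{and}\quad 1-\tfrac12\|\mathbb P^n_f-\mathbb P^n_g\|_{TV}\ge R\big(n\|f-g\|_2^2+n^{1-\alpha}\|f-g\|_{\mathcal H^\alpha}^2\big).$$
   Context: For a continuous function $f$ on $[0,1]$, $\mathbb P^n_f$ is the law of $(Z^n_0,\dots,Z^n_n)$ with $Z^n_i=f(i/n)+\tau\xi^n_i$, $\xi^n_i$ i.i.d. standard Gaussian. $\|\mu\|_{TV}=\sup_{\|h\|_\infty\le1}|\int h\,d\mu|$ for a signed measure $\mu$. $\|f\|_2$ is the $L^2([0,1])$ norm. For $0\le\alpha<1$, $\|f\|_{\mathcal H^\alpha}=\|f\|_\infty+\sup_{s\ne t}|f(s)-f(t)|/|s-t|^\alpha$, and $\mathcal H^\alpha$ is the set of continuous $f$ on $[0,1]$ with $\|f\|_{\mathcal H^\alpha}<\infty$. *)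

theory Defs
  imports "HOL-Probability.Probability"
begin

text \<open>Law of (Z_0,...,Z_n), Z_i = f(i/n) + tau xi_i, xi_i iid standard Gaussian,
  as a product measure on functions indexed by {..n}.\<close>
definition obs_law :: "real \<Rightarrow> nat \<Rightarrow> (real \<Rightarrow> real) \<Rightarrow> (nat \<Rightarrow> real) measure" where
  "obs_law \<tau> n f = PiM {..n} (\<lambda>i. density lborel (normal_density (f (real i / real n)) \<tau>))"

definition tv_norm :: "'a measure \<Rightarrow> 'a measure \<Rightarrow> real" where
  "tv_norm M N = (SUP h \<in> {h. h \<in> borel_measurable M \<and> (\<forall>x\<in>space M. \<bar>h x\<bar> \<le> 1)}.
                    \<bar>(\<integral>x. h x \<partial>M) - (\<integral>x. h x \<partial>N)\<bar>)"

definition sup_norm :: "(real \<Rightarrow> real) \<Rightarrow> real" where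
  "sup_norm f = (SUP t \<in> {0..1}. \<bar>f t\<bar>)"

definition L2_norm01 :: "(real \<Rightarrow> real) \<Rightarrow> real" where
  "L2_norm01 f = sqrt (integral {0..1} (\<lambda>t. (f t)^2))"

definition holder_quot :: "real \<Rightarrow> (real \<Rightarrow> real) \<Rightarrow> real set" where
  "holder_quot \<alpha> f = {\<bar>f s - f t\<bar> / \<bar>s - t\<bar> powr \<alpha> | s t. s \<in> {0..1} \<and> t \<in> {0..1} \<and> s \<noteq> t}"

definition holder_norm :: "real \<Rightarrow> (real \<Rightarrow> real) \<Rightarrow> real" where
  "holder_norm \<alpha> f = sup_norm f + Sup (holder_quot \<alpha> f)"

definition holder_space :: "real \<Rightarrow> (real \<Rightarrow> real) set" where
  "holder_space \<alpha> = {f. continuous_on {0..1} f \<and> bdd_above (holder_quot \<alpha> f)}"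

end

theory Submission
  imports Defs
begin

text \<open>
  For laws with densities P and Q, the total variation distance is at most \<open>2 sqrt (1 - B\<^sup>2)\<close>,
  where \<open>B = \<integral> sqrt (P Q)\<close> is the Bhattacharyya coefficient. B is multiplicative over
  independent coordinates, and for two Gaussians with variance \<open>\<tau>\<^sup>2\<close> and means m, m' it
  equals \<open>exp (- (m - m')\<^sup>2 / (8 \<tau>\<^sup>2))\<close>. Hence the distance between the two observation
  laws is at most \<open>2 sqrt (1 - exp (- S / (4 \<tau>\<^sup>2)))\<close>, where S is the sum of the squared
  differences of f and g on the grid \<open>i / n\<close>.
  The upper bound then follows from \<open>1 - exp (- x) \<le> x\<close> and \<open>S \<le> 2 n \<parallel>f - g\<parallel>\<^sub>\<infinity>\<^sup>2\<close>.
  For the lower bound, \<open>1 - sqrt (1 - E) \<ge> E / 2\<close>, and S is compared with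
  \<open>n \<parallel>f - g\<parallel>\<^sub>2\<^sup>2\<close> cell by cell: on a grid cell of length 1/n the H\<ouml>lder seminorm K of
  f - g lets it move by at most \<open>K n powr (- \<alpha>)\<close>, so that
  \<open>S \<le> 2 n \<parallel>f - g\<parallel>\<^sub>2\<^sup>2 + 2 n powr (1 - 2 \<alpha>) K\<^sup>2\<close>. The term of the grid point 0
  is not covered by any cell; it vanishes because f 0 = g 0.
\<close>

lemma Cauchy_Schwarz_integral_nonneg:
  fixes f g :: "'a \<Rightarrow> real"
  assumes [measurable]: "f \<in> borel_measurable M" "g \<in> borel_measurable M"
    and "\<And>x. 0 \<le> f x" "\<And>x. 0 \<le> g x"
    and "integrable M (\<lambda>x. (f x)\<^sup>2)" "integrable M (\<lambda>x. (g x)\<^sup>2)" "integrable M (\<lambda>x. f x * g x)"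
  shows "(\<integral>x. f x * g x \<partial>M)\<^sup>2 \<le> (\<integral>x. (f x)\<^sup>2 \<partial>M) * (\<integral>x. (g x)\<^sup>2 \<partial>M)"
proof -
  have nn: "(\<integral>\<^sup>+x. ennreal (u x) \<partial>M) = ennreal (\<integral>x. u x \<partial>M)"
    if "integrable M u" "\<And>x. 0 \<le> u x" for u
    using that by (intro nn_integral_eq_integral) auto
  have "ennreal ((\<integral>x. f x * g x \<partial>M)\<^sup>2) = (\<integral>\<^sup>+x. ennreal (f x) * ennreal (g x) \<partial>M)\<^sup>2"
    using assms by (simp add: nn ennreal_mult'[symmetric] ennreal_power integral_nonneg_AE)
  also have "\<dots> \<le> (\<integral>\<^sup>+x. ennreal (f x) ^ 2 \<partial>M) * (\<integral>\<^sup>+x. ennreal (g x) ^ 2 \<partial>M)"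
    by (rule Cauchy_Schwarz_nn_integral) auto
  also have "\<dots> = ennreal ((\<integral>x. (f x)\<^sup>2 \<partial>M) * (\<integral>x. (g x)\<^sup>2 \<partial>M))"
    using assms by (simp add: nn ennreal_power ennreal_mult integral_nonneg_AE)
  finally show ?thesis
    using assms by (simp add: integral_nonneg_AE)
qed

text \<open>Write \<open>\<bar>P - Q\<bar> = \<bar>\<surd>P - \<surd>Q\<bar> (\<surd>P + \<surd>Q)\<close> and apply Cauchy-Schwarz.\<close>

lemma integral_abs_diff_le_Bhattacharyya:
  fixes P Q :: "'a \<Rightarrow> real"
  assumes [measurable]: "P \<in> borel_measurable L" "Q \<in> borel_measurable L"
    and P0: "\<And>x. 0 \<le> P x" and Q0: "\<And>x. 0 \<le> Q x"
    and "integrable L P" "integrable L Q"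
    and "(\<integral>x. P x \<partial>L) = 1" "(\<integral>x. Q x \<partial>L) = 1"
  shows "(\<integral>x. \<bar>P x - Q x\<bar> \<partial>L) \<le> 2 * sqrt (1 - (\<integral>x. sqrt (P x * Q x) \<partial>L)\<^sup>2)"
proof -
  define B where "B = (\<integral>x. sqrt (P x * Q x) \<partial>L)"
  define a where "a x = \<bar>sqrt (P x) - sqrt (Q x)\<bar>" for x
  define b where "b x = sqrt (P x) + sqrt (Q x)" for x
  have a2: "(a x)\<^sup>2 = P x + Q x - 2 * sqrt (P x * Q x)"
   and b2: "(b x)\<^sup>2 = P x + Q x + 2 * sqrt (P x * Q x)" for x
    unfolding a_def b_def using P0[of x] Q0[of x]
    by (simp_all add: power2_eq_square algebra_simps real_sqrt_mult)
  have ab: "a x * b x = \<bar>P x - Q x\<bar>" for x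
  proof -
    have "(sqrt (P x) - sqrt (Q x)) * (sqrt (P x) + sqrt (Q x)) = P x - Q x"
      using P0[of x] Q0[of x] by (simp add: algebra_simps power2_eq_square[symmetric])
    then show ?thesis
      unfolding a_def b_def by (metis abs_mult abs_of_nonneg add_nonneg_nonneg real_sqrt_ge_zero P0 Q0)
  qed
  have ab_nonneg: "0 \<le> a x" "0 \<le> b x" for x
    unfolding a_def b_def using P0[of x] Q0[of x] by simp_all
  have [measurable]: "a \<in> borel_measurable L" "b \<in> borel_measurable L"
    unfolding a_def[abs_def] b_def[abs_def] by measurable
  have AM_GM: "norm (sqrt (P x * Q x)) \<le> norm ((P x + Q x) / 2)" for x
    using arith_geo_mean_sqrt[OF P0[of x] Q0[of x]] P0[of x] Q0[of x] by simp
  have "integrable L (\<lambda>x. sqrt (P x * Q x))"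
    by (rule Bochner_Integration.integrable_bound[where f="\<lambda>x. (P x + Q x) / 2"])
       (use assms AM_GM in auto)
  then have ia: "integrable L (\<lambda>x. (a x)\<^sup>2)" "(\<integral>x. (a x)\<^sup>2 \<partial>L) = 2 - 2 * B"
        and ib: "integrable L (\<lambda>x. (b x)\<^sup>2)" "(\<integral>x. (b x)\<^sup>2 \<partial>L) = 2 + 2 * B"
    unfolding a2 b2 B_def using assms by simp_all
  have "(\<integral>x. \<bar>P x - Q x\<bar> \<partial>L)\<^sup>2 = (\<integral>x. a x * b x \<partial>L)\<^sup>2"
    by (simp only: ab)
  also have "\<dots> \<le> (\<integral>x. (a x)\<^sup>2 \<partial>L) * (\<integral>x. (b x)\<^sup>2 \<partial>L)"
    by (rule Cauchy_Schwarz_integral_nonneg) (use ia ib assms ab_nonneg in \<open>simp_all add: ab\<close>)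
  also have "\<dots> = 4 * (1 - B\<^sup>2)"
    unfolding ia ib by (simp add: algebra_simps power2_eq_square)
  finally have "(\<integral>x. \<bar>P x - Q x\<bar> \<partial>L) \<le> sqrt (4 * (1 - B\<^sup>2))"
    by (rule real_le_rsqrt)
  also have "\<dots> = 2 * sqrt (1 - B\<^sup>2)"
    by (simp only: real_sqrt_mult real_sqrt_four)
  finally show ?thesis
    unfolding B_def .
qed

lemma tv_norm_density_le_integral_abs_diff:
  fixes P Q :: "'a \<Rightarrow> real"
  assumes [measurable]: "P \<in> borel_measurable L" "Q \<in> borel_measurable L"
    and "\<And>x. 0 \<le> P x" "\<And>x. 0 \<le> Q x"
    and "integrable L P" "integrable L Q"
  shows "tv_norm (density L P) (density L Q) \<le> (\<integral>x. \<bar>P x - Q x\<bar> \<partial>L)"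
  unfolding tv_norm_def
proof (rule cSUP_least)
  let ?T = "{h :: 'a \<Rightarrow> real. h \<in> borel_measurable (density L P) \<and> (\<forall>x\<in>space (density L P). \<bar>h x\<bar> \<le> 1)}"
  have "(\<lambda>_. 0) \<in> ?T"
    by simp
  then show "?T \<noteq> {}"
    by blast
  fix h assume "h \<in> ?T"
  then have [measurable]: "h \<in> borel_measurable L" and h1: "\<And>x. x \<in> space L \<Longrightarrow> \<bar>h x\<bar> \<le> 1"
    by simp_all
  have bounded: "integrable L (\<lambda>x. u x * h x)" if [measurable]: "u \<in> borel_measurable L"
    and "integrable L u" for u
  proof (rule Bochner_Integration.integrable_bound[OF \<open>integrable L u\<close>])
    show "(\<lambda>x. u x * h x) \<in> borel_measurable L" by measurable
    show "AE x in L. norm (u x * h x) \<le> norm (u x)"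
      using h1 by (intro AE_I2) (simp add: abs_mult mult_left_le)
  qed
  have diff_h: "integrable L (\<lambda>x. (P x - Q x) * h x)"
    using assms by (intro bounded) auto
  have "(\<integral>x. h x \<partial>density L P) - (\<integral>x. h x \<partial>density L Q) = (\<integral>x. (P x - Q x) * h x \<partial>L)"
    using assms by (simp add: integral_density bounded left_diff_distrib)
  also have "\<bar>\<dots>\<bar> \<le> (\<integral>x. \<bar>(P x - Q x) * h x\<bar> \<partial>L)"
    by (rule integral_abs_bound)
  also have "\<dots> \<le> (\<integral>x. \<bar>P x - Q x\<bar> \<partial>L)"
  proof (rule integral_mono_AE)
    show "integrable L (\<lambda>x. \<bar>(P x - Q x) * h x\<bar>)"
      using diff_h by (rule integrable_abs)
    show "integrable L (\<lambda>x. \<bar>P x - Q x\<bar>)"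
      using assms by simp
    show "AE x in L. \<bar>(P x - Q x) * h x\<bar> \<le> \<bar>P x - Q x\<bar>"
      using h1 by (intro AE_I2) (simp add: abs_mult mult_left_le)
  qed
  finally show "\<bar>(\<integral>x. h x \<partial>density L P) - (\<integral>x. h x \<partial>density L Q)\<bar> \<le> (\<integral>x. \<bar>P x - Q x\<bar> \<partial>L)" .
qed

lemma PiM_density_lborel:
  fixes \<phi> :: "'i \<Rightarrow> real \<Rightarrow> real"
  assumes "finite I"
    and [measurable]: "\<And>i. \<phi> i \<in> borel_measurable borel"
    and nonneg: "\<And>i x. 0 \<le> \<phi> i x"
    and prob: "\<And>i. prob_space (density lborel (\<phi> i))"
  shows "PiM I (\<lambda>i. density lborel (\<phi> i)) = density (PiM I (\<lambda>_. lborel)) (\<lambda>x. \<Prod>i\<in>I. \<phi> i (x i))"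
proof -
  interpret P: product_sigma_finite "\<lambda>i. density lborel (\<phi> i)"
    unfolding product_sigma_finite_def using prob prob_space_imp_sigma_finite by blast
  interpret L: product_sigma_finite "\<lambda>_. lborel :: real measure"
    by (simp add: product_sigma_finite_def lborel.sigma_finite_measure_axioms)
  show ?thesis
  proof (rule P.PiM_eqI[symmetric, OF \<open>finite I\<close>])
    fix A assume A: "\<And>i. i \<in> I \<Longrightarrow> A i \<in> sets (density lborel (\<phi> i))"
    then have [measurable]: "Pi\<^sub>E I A \<in> sets (PiM I (\<lambda>_. lborel))"
      by (intro sets_PiM_I_finite \<open>finite I\<close>) auto
    have "indicator (Pi\<^sub>E I A) x = (\<Prod>i\<in>I. indicator (A i) (x i) :: ennreal)"
      if "x \<in> space (PiM I (\<lambda>_. lborel :: real measure))" for x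
      using that \<open>finite I\<close> by (auto simp: space_PiM indicator_def PiE_def Pi_def prod_zero_iff)
    then have "emeasure (density (PiM I (\<lambda>_. lborel)) (\<lambda>x. \<Prod>i\<in>I. \<phi> i (x i))) (Pi\<^sub>E I A)
        = (\<integral>\<^sup>+x. (\<Prod>i\<in>I. ennreal (\<phi> i (x i)) * indicator (A i) (x i)) \<partial>PiM I (\<lambda>_. lborel))"
      by (auto simp: emeasure_density prod_ennreal nonneg prod.distrib intro!: nn_integral_cong)
    also have "\<dots> = (\<Prod>i\<in>I. \<integral>\<^sup>+y. ennreal (\<phi> i y) * indicator (A i) y \<partial>lborel)"
      using A by (intro L.product_nn_integral_prod \<open>finite I\<close>) auto
    also have "\<dots> = (\<Prod>i\<in>I. emeasure (density lborel (\<phi> i)) (A i))"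
      using A by (intro prod.cong refl) (simp add: emeasure_density)
    finally show "emeasure (density (PiM I (\<lambda>_. lborel)) (\<lambda>x. \<Prod>i\<in>I. \<phi> i (x i))) (Pi\<^sub>E I A)
        = (\<Prod>i\<in>I. emeasure (density lborel (\<phi> i)) (A i))" .
  qed (auto intro!: sets_PiM_cong)
qed

lemma sqrt_normal_density_mult:
  assumes "\<tau> > 0"
  shows "sqrt (normal_density m1 \<tau> x * normal_density m2 \<tau> x) =
         exp (-(m1 - m2)\<^sup>2 / (8 * \<tau>\<^sup>2)) * normal_density ((m1 + m2) / 2) \<tau> x"
proof -
  define k where "k = 1 / sqrt (2 * pi * \<tau>\<^sup>2)"
  have "-(x - m1)\<^sup>2 / (2 * \<tau>\<^sup>2) + -(x - m2)\<^sup>2 / (2 * \<tau>\<^sup>2) =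
        2 * (-(m1 - m2)\<^sup>2 / (8 * \<tau>\<^sup>2) + -(x - (m1 + m2) / 2)\<^sup>2 / (2 * \<tau>\<^sup>2))"
    using assms by (simp add: field_simps power2_eq_square)
  then have "normal_density m1 \<tau> x * normal_density m2 \<tau> x
      = (k * exp (-(m1 - m2)\<^sup>2 / (8 * \<tau>\<^sup>2) + -(x - (m1 + m2) / 2)\<^sup>2 / (2 * \<tau>\<^sup>2)))\<^sup>2"
    unfolding normal_density_def k_def
    by (simp add: exp_add[symmetric] power_mult_distrib exp_double[symmetric] power2_eq_square)
  also have "\<dots> = (exp (-(m1 - m2)\<^sup>2 / (8 * \<tau>\<^sup>2)) * normal_density ((m1 + m2) / 2) \<tau> x)\<^sup>2"
    unfolding normal_density_def k_def by (simp add: exp_diff exp_minus field_simps)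
  finally show ?thesis
    using assms by (simp add: normal_density_nonneg)
qed

lemma real_sqrt_prod: "sqrt (\<Prod>i\<in>I. c i) = (\<Prod>i\<in>I. sqrt (c i))"
  by (induction I rule: infinite_finite_induct) (simp_all add: real_sqrt_mult)

lemma tv_norm_PiM_normal_le:
  fixes F G :: "'i \<Rightarrow> real"
  assumes "\<tau> > 0" and "finite I"
  shows "tv_norm (PiM I (\<lambda>i. density lborel (normal_density (F i) \<tau>)))
                 (PiM I (\<lambda>i. density lborel (normal_density (G i) \<tau>)))
         \<le> 2 * sqrt (1 - exp (- (\<Sum>i\<in>I. (F i - G i)\<^sup>2) / (4 * \<tau>\<^sup>2)))"
proof -
  let ?L = "PiM I (\<lambda>_. lborel :: real measure)"
  interpret L: product_sigma_finite "\<lambda>_. lborel :: real measure"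
    by (simp add: product_sigma_finite_def lborel.sigma_finite_measure_axioms)
  define P where "P x = (\<Prod>i\<in>I. normal_density (F i) \<tau> (x i))" for x :: "'i \<Rightarrow> real"
  define Q where "Q x = (\<Prod>i\<in>I. normal_density (G i) \<tau> (x i))" for x :: "'i \<Rightarrow> real"
  have law: "PiM I (\<lambda>i. density lborel (normal_density (H i) \<tau>)) =
      density ?L (\<lambda>x. \<Prod>i\<in>I. normal_density (H i) \<tau> (x i))" for H
    using assms by (intro PiM_density_lborel) (auto intro: prob_space_normal_density)
  have meas[measurable]: "P \<in> borel_measurable ?L" "Q \<in> borel_measurable ?L"
    unfolding P_def Q_def by measurable
  have nonneg: "\<And>x. 0 \<le> P x" "\<And>x. 0 \<le> Q x"
    unfolding P_def Q_def by (simp_all add: prod_nonneg)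
  have densities: "integrable ?L P" "integrable ?L Q" "(\<integral>x. P x \<partial>?L) = 1" "(\<integral>x. Q x \<partial>?L) = 1"
    unfolding P_def Q_def using assms
    by (auto intro!: L.product_integrable_prod integrable_normal_density)
       (subst L.product_integral_prod; simp add: integrable_normal_density)+
  have "(\<integral>x. sqrt (P x * Q x) \<partial>?L) = (\<Prod>i\<in>I. exp (-(F i - G i)\<^sup>2 / (8 * \<tau>\<^sup>2)))"
    unfolding P_def Q_def prod.distrib[symmetric] real_sqrt_prod sqrt_normal_density_mult[OF assms(1)]
    using assms by (subst L.product_integral_prod) simp_all
  also have "\<dots> = exp (\<Sum>i\<in>I. -(F i - G i)\<^sup>2 / (8 * \<tau>\<^sup>2))"
    using assms(2) by (simp add: exp_sum)
  also have "\<dots> = exp (- (\<Sum>i\<in>I. (F i - G i)\<^sup>2) / (8 * \<tau>\<^sup>2))"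
    by (simp add: sum_divide_distrib sum_negf)
  finally have BC: "(\<integral>x. sqrt (P x * Q x) \<partial>?L)\<^sup>2 = exp (- (\<Sum>i\<in>I. (F i - G i)\<^sup>2) / (4 * \<tau>\<^sup>2))"
    by (simp add: exp_double[symmetric])
  have "tv_norm (PiM I (\<lambda>i. density lborel (normal_density (F i) \<tau>)))
                (PiM I (\<lambda>i. density lborel (normal_density (G i) \<tau>)))
      = tv_norm (density ?L P) (density ?L Q)"
    unfolding law P_def Q_def ..
  also have "\<dots> \<le> (\<integral>x. \<bar>P x - Q x\<bar> \<partial>?L)"
    using meas nonneg densities(1,2) by (rule tv_norm_density_le_integral_abs_diff)
  also have "\<dots> \<le> 2 * sqrt (1 - (\<integral>x. sqrt (P x * Q x) \<partial>?L)\<^sup>2)"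
    using meas nonneg densities by (rule integral_abs_diff_le_Bhattacharyya)
  finally show ?thesis
    unfolding BC .
qed

lemma tv_norm_obs_law_le:
  assumes "\<tau> > 0"
  shows "tv_norm (obs_law \<tau> n f) (obs_law \<tau> n g)
         \<le> 2 * sqrt (1 - exp (- (\<Sum>i\<le>n. (f (real i / real n) - g (real i / real n))\<^sup>2) / (4 * \<tau>\<^sup>2)))"
  unfolding obs_law_def using tv_norm_PiM_normal_le[OF assms finite_atMost] .

lemma sqrt_one_minus_exp_le: "0 \<le> x \<Longrightarrow> sqrt (1 - exp (- x)) \<le> sqrt x"
  using exp_ge_add_one_self[of "- x"] by (intro real_sqrt_le_mono) linarith

lemma half_le_one_minus_sqrt_one_minus:
  fixes E :: real
  assumes "E \<le> 1"
  shows "E / 2 \<le> 1 - sqrt (1 - E)"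
proof -
  have "sqrt (1 - E) \<le> sqrt ((1 - E / 2)\<^sup>2)"
    by (rule real_sqrt_le_mono) (simp add: power2_eq_square algebra_simps)
  also have "\<dots> = 1 - E / 2" using assms by simp
  finally show ?thesis by simp
qed

lemma holder_space_diff:
  assumes "f \<in> holder_space \<alpha>" "g \<in> holder_space \<alpha>"
  shows "(\<lambda>t. f t - g t) \<in> holder_space \<alpha>"
proof -
  have bf: "bdd_above (holder_quot \<alpha> f)" and bg: "bdd_above (holder_quot \<alpha> g)"
    using assms unfolding holder_space_def by auto
  have "q \<le> Sup (holder_quot \<alpha> f) + Sup (holder_quot \<alpha> g)"
    if q_mem: "q \<in> holder_quot \<alpha> (\<lambda>t. f t - g t)" for q
  proof -
    obtain s t where st: "s \<in> {0..1}" "t \<in> {0..1}" "s \<noteq> t"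
      and q: "q = \<bar>(f s - g s) - (f t - g t)\<bar> / \<bar>s - t\<bar> powr \<alpha>"
      using q_mem unfolding holder_quot_def by blast
    have "\<bar>f s - f t\<bar> / \<bar>s - t\<bar> powr \<alpha> \<in> holder_quot \<alpha> f"
     and "\<bar>g s - g t\<bar> / \<bar>s - t\<bar> powr \<alpha> \<in> holder_quot \<alpha> g"
      unfolding holder_quot_def using st by blast+
    then have "\<bar>f s - f t\<bar> / \<bar>s - t\<bar> powr \<alpha> + \<bar>g s - g t\<bar> / \<bar>s - t\<bar> powr \<alpha>
        \<le> Sup (holder_quot \<alpha> f) + Sup (holder_quot \<alpha> g)"
      by (intro add_mono cSup_upper bf bg)
    moreover have "q \<le> \<bar>f s - f t\<bar> / \<bar>s - t\<bar> powr \<alpha> + \<bar>g s - g t\<bar> / \<bar>s - t\<bar> powr \<alpha>"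
      unfolding q add_divide_distrib[symmetric] by (intro divide_right_mono) auto
    ultimately show ?thesis by linarith
  qed
  then show ?thesis
    using assms unfolding holder_space_def bdd_above_def by (auto intro!: continuous_intros)
qed

lemma Sup_holder_quot_nonneg:
  assumes "bdd_above (holder_quot \<alpha> h)"
  shows "0 \<le> Sup (holder_quot \<alpha> h)"
proof -
  have "\<bar>h 0 - h 1\<bar> / \<bar>0 - 1\<bar> powr \<alpha> \<in> holder_quot \<alpha> h"
    unfolding holder_quot_def by (intro CollectI exI[of _ "0::real"] exI[of _ "1::real"]) simp
  then have "\<bar>h 0 - h 1\<bar> / \<bar>0 - 1\<bar> powr \<alpha> \<le> Sup (holder_quot \<alpha> h)"
    by (intro cSup_upper assms)
  then show ?thesis
    by (rule order_trans[rotated]) simp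
qed

lemma abs_diff_le_Sup_holder_quot:
  assumes "bdd_above (holder_quot \<alpha> h)" and "s \<in> {0..1}" "t \<in> {0..1}"
  shows "\<bar>h s - h t\<bar> \<le> Sup (holder_quot \<alpha> h) * \<bar>s - t\<bar> powr \<alpha>"
proof (cases "s = t")
  case False
  then have "\<bar>h s - h t\<bar> / \<bar>s - t\<bar> powr \<alpha> \<in> holder_quot \<alpha> h"
    unfolding holder_quot_def using assms by blast
  then have "\<bar>h s - h t\<bar> / \<bar>s - t\<bar> powr \<alpha> \<le> Sup (holder_quot \<alpha> h)"
    by (intro cSup_upper assms)
  then show ?thesis using False by (simp add: divide_le_eq)
qed simp

lemma abs_le_sup_norm:
  assumes "continuous_on {0..1} h" and "t \<in> {0..1}"
  shows "\<bar>h t\<bar> \<le> sup_norm h"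
proof -
  have "bdd_above ((\<lambda>t. \<bar>h t\<bar>) ` {0..1})"
    by (intro bounded_imp_bdd_above compact_imp_bounded compact_continuous_image
        continuous_intros assms compact_Icc)
  then show ?thesis unfolding sup_norm_def by (intro cSUP_upper assms)
qed

lemma sq_le_cell_integral:
  fixes h :: "real \<Rightarrow> real"
  assumes "0 \<le> a" "a \<le> b" "b \<le> 1" and cont: "continuous_on {0..1} h" and "0 \<le> \<alpha>" "0 \<le> K"
    and hol: "\<And>s t. s \<in> {0..1} \<Longrightarrow> t \<in> {0..1} \<Longrightarrow> \<bar>h s - h t\<bar> \<le> K * \<bar>s - t\<bar> powr \<alpha>"
  shows "(b - a) * (h b)\<^sup>2 \<le> 2 * integral {a..b} (\<lambda>t. (h t)\<^sup>2) + 2 * (b - a) * (K * (b - a) powr \<alpha>)\<^sup>2"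
proof -
  define d where "d = K * (b - a) powr \<alpha>"
  have pointwise: "(h b)\<^sup>2 \<le> 2 * (h t)\<^sup>2 + 2 * d\<^sup>2" if "t \<in> {a..b}" for t
  proof -
    have "\<bar>h b - h t\<bar> \<le> K * \<bar>b - t\<bar> powr \<alpha>"
      using that assms by (intro hol) auto
    also have "\<dots> \<le> d"
      unfolding d_def using that assms by (intro mult_left_mono powr_mono2) auto
    finally have "\<bar>h b\<bar> \<le> \<bar>h t\<bar> + d"
      by linarith
    then have "(h b)\<^sup>2 \<le> (\<bar>h t\<bar> + d)\<^sup>2"
      by (metis abs_ge_zero power2_abs power_mono)
    also have "\<dots> \<le> 2 * (h t)\<^sup>2 + 2 * d\<^sup>2"
      using zero_le_power2[of "\<bar>h t\<bar> - d"] by (simp add: power2_eq_square algebra_simps)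
    finally show ?thesis .
  qed
  have cont_ab: "continuous_on {a..b} h"
    by (rule continuous_on_subset[OF cont]) (use assms in auto)
  have integrable: "(\<lambda>t. (h t)\<^sup>2) integrable_on {a..b}"
    and integrable': "(\<lambda>t. 2 * (h t)\<^sup>2 + 2 * d\<^sup>2) integrable_on {a..b}"
    by (intro integrable_continuous_interval continuous_intros cont_ab)+
  have "(b - a) * (h b)\<^sup>2 = integral {a..b} (\<lambda>t. (h b)\<^sup>2)"
    using assms by simp
  also have "\<dots> \<le> integral {a..b} (\<lambda>t. 2 * (h t)\<^sup>2 + 2 * d\<^sup>2)"
    using integrable' pointwise by (intro integral_le) auto
  also have "\<dots> = integral {a..b} (\<lambda>t. 2 * (h t)\<^sup>2) + integral {a..b} (\<lambda>t. 2 * d\<^sup>2)"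
    using integrable by (intro integral_add) auto
  also have "\<dots> = 2 * integral {a..b} (\<lambda>t. (h t)\<^sup>2) + 2 * (b - a) * d\<^sup>2"
    using assms by simp
  finally show ?thesis
    unfolding d_def .
qed

lemma sum_sq_grid_le:
  fixes h :: "real \<Rightarrow> real"
  assumes "n \<ge> 1" and cont: "continuous_on {0..1} h" and "h 0 = 0" and "0 \<le> \<alpha>" "0 \<le> K"
    and hol: "\<And>s t. s \<in> {0..1} \<Longrightarrow> t \<in> {0..1} \<Longrightarrow> \<bar>h s - h t\<bar> \<le> K * \<bar>s - t\<bar> powr \<alpha>"
  shows "(\<Sum>i\<le>n. (h (real i / real n))\<^sup>2)
         \<le> 2 * real n * integral {0..1} (\<lambda>t. (h t)\<^sup>2) + 2 * real n powr (1 - 2 * \<alpha>) * K\<^sup>2"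
proof -
  have n: "real n > 0"
    using assms by simp
  define c where "c = 2 * (K / real n powr \<alpha>)\<^sup>2"
  have partial: "(\<Sum>i\<le>k. (h (real i / real n))\<^sup>2)
      \<le> 2 * real n * integral {0..real k / real n} (\<lambda>t. (h t)\<^sup>2) + real k * c" if "k \<le> n" for k
    using that
  proof (induction k)
    case 0
    then show ?case using \<open>h 0 = 0\<close> by simp
  next
    case (Suc k)
    let ?a = "real k / real n" and ?b = "real (Suc k) / real n"
    have ab: "0 \<le> ?a" "?a \<le> ?b" "?b \<le> 1" "?b - ?a = 1 / real n"
      using Suc.prems n by (auto simp: field_simps)
    have "(1 / real n) * (h ?b)\<^sup>2
        \<le> 2 * integral {?a..?b} (\<lambda>t. (h t)\<^sup>2) + 2 * (1 / real n) * (K * (1 / real n) powr \<alpha>)\<^sup>2"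
      using sq_le_cell_integral[OF ab(1-3) cont \<open>0 \<le> \<alpha>\<close> \<open>0 \<le> K\<close> hol] unfolding ab(4) .
    then have cell: "(h ?b)\<^sup>2 \<le> 2 * real n * integral {?a..?b} (\<lambda>t. (h t)\<^sup>2) + c"
      using n by (simp add: c_def powr_divide field_simps)
    have "continuous_on {0..?b} (\<lambda>t. (h t)\<^sup>2)"
      using ab by (intro continuous_intros continuous_on_subset[OF cont]) auto
    then have combine: "integral {0..?b} (\<lambda>t. (h t)\<^sup>2)
        = integral {0..?a} (\<lambda>t. (h t)\<^sup>2) + integral {?a..?b} (\<lambda>t. (h t)\<^sup>2)"
      using ab by (intro Henstock_Kurzweil_Integration.integral_combine[symmetric]
          integrable_continuous_interval) auto
    have "(\<Sum>i\<le>Suc k. (h (real i / real n))\<^sup>2)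
        \<le> (2 * real n * integral {0..?a} (\<lambda>t. (h t)\<^sup>2) + real k * c)
          + (2 * real n * integral {?a..?b} (\<lambda>t. (h t)\<^sup>2) + c)"
      using Suc cell by simp
    also have "\<dots> = 2 * real n * integral {0..?b} (\<lambda>t. (h t)\<^sup>2) + real (Suc k) * c"
      unfolding combine by (simp add: algebra_simps)
    finally show ?case .
  qed
  have "real n * c = 2 * real n powr (1 - 2 * \<alpha>) * K\<^sup>2"
    using n by (simp add: c_def powr_diff powr_power power_divide)
  then show ?thesis
    using partial[of n] n by simp
qed

lemma tv_norm_obs_law_le_sup_norm:
  assumes "\<tau> > 0" "n \<ge> 1" "continuous_on {0..1} f" "continuous_on {0..1} g"
  shows "tv_norm (obs_law \<tau> n f) (obs_law \<tau> n g) \<le> sqrt 2 / \<tau> * sqrt (real n) * sup_norm (\<lambda>t. f t - g t)"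
proof -
  define S where "S = (\<Sum>i\<le>n. (f (real i / real n) - g (real i / real n))\<^sup>2)"
  define D where "D = sup_norm (\<lambda>t. f t - g t)"
  have D: "\<bar>f t - g t\<bar> \<le> D" if "t \<in> {0..1}" for t
    unfolding D_def using assms that by (intro abs_le_sup_norm continuous_intros)
  have "0 \<le> D"
    using D[of 0] by simp
  have "(f (real i / real n) - g (real i / real n))\<^sup>2 \<le> D\<^sup>2" if "i \<in> {..n}" for i
  proof -
    have "real i / real n \<in> {0..1}"
      using that assms by (auto simp: field_simps)
    then show ?thesis
      using D by (metis abs_ge_zero power2_abs power_mono)
  qed
  then have "S \<le> real (card {..n}) * D\<^sup>2"
    unfolding S_def by (rule sum_bounded_above)
  also have "\<dots> \<le> 2 * real n * D\<^sup>2"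
    using assms by (intro mult_right_mono) auto
  finally have S: "S \<le> 2 * real n * D\<^sup>2" .
  have "0 \<le> S"
    unfolding S_def by (simp add: sum_nonneg)
  have "tv_norm (obs_law \<tau> n f) (obs_law \<tau> n g) \<le> 2 * sqrt (1 - exp (- (S / (4 * \<tau>\<^sup>2))))"
    using tv_norm_obs_law_le[OF assms(1)] unfolding S_def by simp
  also have "\<dots> \<le> 2 * sqrt (S / (4 * \<tau>\<^sup>2))"
    using \<open>0 \<le> S\<close> assms by (intro mult_left_mono sqrt_one_minus_exp_le) auto
  also have "\<dots> = sqrt S / \<tau>"
    using assms by (simp add: real_sqrt_divide real_sqrt_mult)
  also have "\<dots> \<le> sqrt (2 * real n * D\<^sup>2) / \<tau>"
    using S assms by (intro divide_right_mono real_sqrt_le_mono) auto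
  also have "\<dots> = sqrt 2 / \<tau> * sqrt (real n) * D"
    using \<open>0 \<le> D\<close> by (simp add: real_sqrt_mult field_simps)
  finally show ?thesis
    unfolding D_def .
qed

lemma one_minus_half_tv_norm_obs_law_ge:
  assumes "\<tau> > 0" "n \<ge> 1" "0 \<le> \<alpha>" and f: "f \<in> holder_space \<alpha>" and g: "g \<in> holder_space \<alpha>"
    and "f 0 = 0" "g 0 = 0"
  shows "exp (- (real n * (L2_norm01 (\<lambda>t. f t - g t))\<^sup>2
                + real n powr (1 - \<alpha>) * (holder_norm \<alpha> (\<lambda>t. f t - g t))\<^sup>2) / (2 * \<tau>\<^sup>2)) / 2
         \<le> 1 - tv_norm (obs_law \<tau> n f) (obs_law \<tau> n g) / 2"
proof -
  define h where "h = (\<lambda>t. f t - g t)"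
  have "h 0 = 0"
    unfolding h_def using assms by simp
  have "h \<in> holder_space \<alpha>"
    unfolding h_def using f g by (rule holder_space_diff)
  then have cont: "continuous_on {0..1} h" and bdd: "bdd_above (holder_quot \<alpha> h)"
    by (simp_all add: holder_space_def)
  define K where "K = Sup (holder_quot \<alpha> h)"
  define x where "x = real n * (L2_norm01 h)\<^sup>2 + real n powr (1 - \<alpha>) * (holder_norm \<alpha> h)\<^sup>2"
  define S where "S = (\<Sum>i\<le>n. (h (real i / real n))\<^sup>2)"
  have "0 \<le> K"
    unfolding K_def using bdd by (rule Sup_holder_quot_nonneg)
  moreover have "K \<le> holder_norm \<alpha> h"
    using abs_le_sup_norm[OF cont, of 0] unfolding holder_norm_def K_def by simp
  ultimately have "real n powr (1 - 2 * \<alpha>) * K\<^sup>2 \<le> real n powr (1 - \<alpha>) * (holder_norm \<alpha> h)\<^sup>2"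
    using assms by (intro mult_mono powr_mono power_mono) auto
  moreover have "(L2_norm01 h)\<^sup>2 = integral {0..1} (\<lambda>t. (h t)\<^sup>2)"
    unfolding L2_norm01_def
    by (simp add: integral_nonneg integrable_continuous_interval continuous_intros cont)
  moreover have "S \<le> 2 * real n * integral {0..1} (\<lambda>t. (h t)\<^sup>2) + 2 * real n powr (1 - 2 * \<alpha>) * K\<^sup>2"
    unfolding S_def K_def using assms(2,3) cont \<open>h 0 = 0\<close> bdd
    by (intro sum_sq_grid_le Sup_holder_quot_nonneg abs_diff_le_Sup_holder_quot) auto
  ultimately have "S \<le> 2 * x"
    unfolding x_def by simp
  define E where "E = exp (- S / (4 * \<tau>\<^sup>2))"
  have "exp (- x / (2 * \<tau>\<^sup>2)) / 2 \<le> E / 2"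
    unfolding E_def using \<open>S \<le> 2 * x\<close> assms by (simp add: field_simps)
  also have "\<dots> \<le> 1 - sqrt (1 - E)"
    unfolding E_def S_def by (intro half_le_one_minus_sqrt_one_minus) (simp add: sum_nonneg)
  also have "\<dots> \<le> 1 - tv_norm (obs_law \<tau> n f) (obs_law \<tau> n g) / 2"
    using tv_norm_obs_law_le[OF assms(1), of n f g] unfolding E_def S_def h_def by simp
  finally show ?thesis
    unfolding x_def h_def .
qed

theorem lemma7p1:
  fixes \<tau> \<alpha> :: real
  assumes "\<tau> > 0" and "0 \<le> \<alpha>" and "\<alpha> < 1"
  shows "\<exists>c > 0. \<exists>R :: real \<Rightarrow> real.
           (\<forall>x \<ge> 0. R x > 0) \<and> (\<forall>x y. 0 \<le> x \<longrightarrow> x \<le> y \<longrightarrow> R y \<le> R x) \<and>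
           (\<forall>(n::nat) f g. n \<ge> 1 \<longrightarrow> f \<in> holder_space \<alpha> \<longrightarrow> g \<in> holder_space \<alpha> \<longrightarrow>
              f 0 = 0 \<longrightarrow> g 0 = 0 \<longrightarrow>
              tv_norm (obs_law \<tau> n f) (obs_law \<tau> n g) \<le> c * sqrt (real n) * sup_norm (\<lambda>t. f t - g t) \<and>
              1 - tv_norm (obs_law \<tau> n f) (obs_law \<tau> n g) / 2 \<ge>
                R (real n * (L2_norm01 (\<lambda>t. f t - g t))^2
                   + real n powr (1 - \<alpha>) * (holder_norm \<alpha> (\<lambda>t. f t - g t))^2))"
proof -
  define R where "R x = exp (- x / (2 * \<tau>\<^sup>2)) / 2" for x :: real
  have "\<forall>x \<ge> 0. R x > 0"
    unfolding R_def by simp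
  moreover have "\<forall>x y. 0 \<le> x \<longrightarrow> x \<le> y \<longrightarrow> R y \<le> R x"
    unfolding R_def using assms by (auto simp: divide_right_mono)
  moreover have "tv_norm (obs_law \<tau> n f) (obs_law \<tau> n g) \<le> sqrt 2 / \<tau> * sqrt (real n) * sup_norm (\<lambda>t. f t - g t) \<and>
      1 - tv_norm (obs_law \<tau> n f) (obs_law \<tau> n g) / 2 \<ge>
        R (real n * (L2_norm01 (\<lambda>t. f t - g t))^2 + real n powr (1 - \<alpha>) * (holder_norm \<alpha> (\<lambda>t. f t - g t))^2)"
    if "n \<ge> 1" "f \<in> holder_space \<alpha>" "g \<in> holder_space \<alpha>" "f 0 = 0" "g 0 = 0" for n f g
    using that assms tv_norm_obs_law_le_sup_norm[of \<tau> n f g] one_minus_half_tv_norm_obs_law_ge[of \<tau> n \<alpha> f g]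
    unfolding R_def by (simp add: holder_space_def)
  ultimately show ?thesis
    using \<open>\<tau> > 0\<close> by (intro exI[of _ "sqrt 2 / \<tau>"] exI[of _ R]) auto
qed

end
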